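(* Consider an implication of canonical form $(\ast)$ and an environment $\eta$. Let $L=\{(i,j)\mid1\le i\le M,1\le j\le N\}$. Suppose (S1) for all $(i,j)\in L$ with $\Pi(i)\not\ge\Omega(j)$ there is $c\in V$ with $\Pi(i)(c)<\Omega(j)(c)$ and such that $\Pi(k)(c)=\Omega(l)(c)$ for every $(k,l)\in L$ with $\Pi(k)\ge\Omega(l)$; and (S2) for every $1\le j\le N$ there is $c\in V$ with $\Omega(j)(c)>0$ and such that $\Pi(k)(c)=\Omega(l)(c)$ for every $(k,l)\in L$ with $\Pi(k)\ge\Omega(l)$. If the implication is unary $\eta$-valid, then the Parametricity Condition holds for it and $\eta$ (and hence, by the preceding proposition, it is binary $\eta$-valid).
   Context: $\mathsf{Heap}$: finite partial functions $\mathsf{PosInt}\to\mathsf{Int}$; $g\sqsubseteq h$ means $h$ extends $g$; $h\cdot g$ union of disjoint heaps; componentwise on $\mathsf{Heap}^n$. $\mathsf{IRel}_n$: upward closed subsets of $\mathsf{Heap}^n$; $p*q=\{\mathbf f\cdot\mathbf g\mid\mathbf f\in p,\mathbf g\in q,\text{componentwise disjoint}\}$; $\Delta_n(X)=\{(h_1,\dots,h_n)\mid\exists f\in X.\ \forall k.\ f\sqsubseteq h_k\}$. Assertions: built from primitive assertions $P$, assertion variables, $\mathsf{true},\mathsf{false},\wedge,\vee,*$, quantifiers over integer variables. $n$-ary meaning under $\eta$ and $\rho:\mathsf{AVar}\to\mathsf{IRel}_n$: $[\![P]\!]^n=\Delta_n([\![P]\!]^{\mathrm{prim}}_\eta)$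 (standard meaning $[\![P]\!]^{\mathrm{prim}}_\eta\subseteq\mathsf{Heap}$), $[\![a]\!]^n=\rho(a)$, connectives by $\mathsf{Heap}^n,\emptyset,\cap,\cup,*$, quantifiers by unions/intersections. $n$-ary $\eta$-validity of $\varphi\Rightarrow\psi$: $[\![\varphi]\!]^n_{\eta,\rho}\subseteq[\![\psi]\!]^n_{\eta,\rho}$ for all $\rho:\mathsf{AVar}\to\mathsf{IRel}_n$ (unary: $n=1$, binary: $n=2$). Canonical form $(\ast)$: $\bigwedge_{i=1}^M\varphi_i*a_{i,1}*\cdots*a_{i,M_i}\Rightarrow\bigvee_{j=1}^N\psi_j*b_{j,1}*\cdots*b_{j,N_j}$, $M\ge1$, $N\ge0$, $\varphi_i,\psi_j$ free of assertion variables, every $b_{j,k}$ among the $a_{i,k}$. $V=\{a_{i,k}\}$; $\Pi(i)(c)=|\{k\mid a_{i,k}=c\}|$, $\Omega(j)(c)=|\{k\mid b_{j,k}=c\}|$; $\Pi(i)\ge\Omega(j)$ iff $\Pi(i)(c)\ge\Omega(j)(c)$ for all $c\in V$, and $\Pi(i)\not\ge\Omega(j)$ otherwise. Disjunct $j$ is empty if $N_j=0$. Parametricity Condition: for all $h,h_1,\dots,h_M\in\mathsf{Heap}$ with $h_i\sqsubseteq h$ and $h_i\in[\![\varphi_i]\!]^1_\eta$ for all $i$, either (1) there are $i,j$ with $h_i\in[\![\psi_j]\!]^1_\eta$ and $\Pi(i)\ge\Omega(j)$, or (2) there is an empty disjunct $j$ with $h\in[\![\psi_j]\!]^1_\eta$.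 *)

theory Defs
  imports Main
begin

text \<open>A heap is a finite partial function from positive integers to integers.
  Addresses are represented by natural numbers, with address 0 excluded.\<close>

type_synonym heap = "nat \<rightharpoonup> int"

definition is_heap :: "heap \<Rightarrow> bool" where
  "is_heap h \<longleftrightarrow> finite (dom h) \<and> 0 \<notin> dom h"

definition Heaps :: "nat \<Rightarrow> heap list set" where
  "Heaps n = {hs. length hs = n \<and> (\<forall>h\<in>set hs. is_heap h)}"

definition heaps_le :: "heap list \<Rightarrow> heap list \<Rightarrow> bool" where
  "heaps_le gs hs \<longleftrightarrow> list_all2 (\<lambda>g h. g \<subseteq>\<^sub>m h) gs hs"

definition IRel :: "nat \<Rightarrow> heap list set set" where
  "IRel n = {R. R \<subseteq> Heaps n \<and> (\<forall>gs\<in>R. \<forall>hs\<in>Heaps n. heaps_le gs hs \<longrightarrow> hs \<in> R)}"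

definition sep :: "heap list set \<Rightarrow> heap list set \<Rightarrow> heap list set" where
  "sep p q = {map2 (++) fs gs | fs gs. fs \<in> p \<and> gs \<in> q \<and>
                 list_all2 (\<lambda>f g. dom f \<inter> dom g = {}) fs gs}"

definition Delta :: "nat \<Rightarrow> heap set \<Rightarrow> heap list set" where
  "Delta n X = {hs \<in> Heaps n. \<exists>f\<in>X. \<forall>h\<in>set hs. f \<subseteq>\<^sub>m h}"

datatype ('p, 'a, 'v) assn =
    Prim 'p
  | AVar 'a
  | ATrue
  | AFalse
  | AConj "('p, 'a, 'v) assn" "('p, 'a, 'v) assn"
  | ADisj "('p, 'a, 'v) assn" "('p, 'a, 'v) assn"
  | AStar "('p, 'a, 'v) assn" "('p, 'a, 'v) assn"
  | AEx 'v "('p, 'a, 'v) assn"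
  | AAll 'v "('p, 'a, 'v) assn"

fun avars :: "('p, 'a, 'v) assn \<Rightarrow> 'a set" where
  "avars (Prim P) = {}"
| "avars (AVar a) = {a}"
| "avars ATrue = {}"
| "avars AFalse = {}"
| "avars (AConj p q) = avars p \<union> avars q"
| "avars (ADisj p q) = avars p \<union> avars q"
| "avars (AStar p q) = avars p \<union> avars q"
| "avars (AEx x p) = avars p"
| "avars (AAll x p) = avars p"

text \<open>n-ary meaning. The parameter I gives the standard (unary) meaning
  of primitive assertions under an environment, as a set of heaps.\<close>
fun sem :: "(('v \<Rightarrow> int) \<Rightarrow> 'p \<Rightarrow> heap set) \<Rightarrow> nat \<Rightarrow> ('v \<Rightarrow> int)
            \<Rightarrow> ('a \<Rightarrow> heap list set) \<Rightarrow> ('p, 'a, 'v) assn \<Rightarrow> heap list set" where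
  "sem I n \<eta> \<rho> (Prim P) = Delta n (I \<eta> P)"
| "sem I n \<eta> \<rho> (AVar a) = \<rho> a"
| "sem I n \<eta> \<rho> ATrue = Heaps n"
| "sem I n \<eta> \<rho> AFalse = {}"
| "sem I n \<eta> \<rho> (AConj p q) = sem I n \<eta> \<rho> p \<inter> sem I n \<eta> \<rho> q"
| "sem I n \<eta> \<rho> (ADisj p q) = sem I n \<eta> \<rho> p \<union> sem I n \<eta> \<rho> q"
| "sem I n \<eta> \<rho> (AStar p q) = sep (sem I n \<eta> \<rho> p) (sem I n \<eta> \<rho> q)"
| "sem I n \<eta> \<rho> (AEx x p) = (\<Union>k. sem I n (\<eta>(x := k)) \<rho> p)"
| "sem I n \<eta> \<rho> (AAll x p) = (\<Inter>k. sem I n (\<eta>(x := k)) \<rho> p)"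

definition valid :: "(('v \<Rightarrow> int) \<Rightarrow> 'p \<Rightarrow> heap set) \<Rightarrow> nat \<Rightarrow> ('v \<Rightarrow> int)
            \<Rightarrow> ('p, 'a, 'v) assn \<Rightarrow> ('p, 'a, 'v) assn \<Rightarrow> bool" where
  "valid I n \<eta> \<phi> \<psi> \<longleftrightarrow>
     (\<forall>\<rho>. (\<forall>a. \<rho> a \<in> IRel n) \<longrightarrow> sem I n \<eta> \<rho> \<phi> \<subseteq> sem I n \<eta> \<rho> \<psi>)"

text \<open>Unary meaning of an assertion free of assertion variables, as a set of heaps
  (the valuation of assertion variables is irrelevant; we use the empty one).\<close>
definition sem1 :: "(('v \<Rightarrow> int) \<Rightarrow> 'p \<Rightarrow> heap set) \<Rightarrow> ('v \<Rightarrow> int)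
            \<Rightarrow> ('p, 'a, 'v) assn \<Rightarrow> heap set" where
  "sem1 I \<eta> \<phi> = {h. [h] \<in> sem I 1 \<eta> (\<lambda>_. {}) \<phi>}"

definition star_vars :: "('p, 'a, 'v) assn \<Rightarrow> 'a list \<Rightarrow> ('p, 'a, 'v) assn" where
  "star_vars \<phi> as = foldl (\<lambda>acc a. AStar acc (AVar a)) \<phi> as"

fun big_conj :: "('p, 'a, 'v) assn list \<Rightarrow> ('p, 'a, 'v) assn" where
  "big_conj [] = ATrue"
| "big_conj [x] = x"
| "big_conj (x # xs) = AConj x (big_conj xs)"

fun big_disj :: "('p, 'a, 'v) assn list \<Rightarrow> ('p, 'a, 'v) assn" where
  "big_disj [] = AFalse"
| "big_disj [x] = x"
| "big_disj (x # xs) = ADisj x (big_disj xs)"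

text \<open>Left- and right-hand side of the canonical implication (indices are 0-based).\<close>
definition canon_lhs :: "('p, 'a, 'v) assn list \<Rightarrow> 'a list list \<Rightarrow> ('p, 'a, 'v) assn" where
  "canon_lhs phis as = big_conj (map2 star_vars phis as)"

definition canon_rhs :: "('p, 'a, 'v) assn list \<Rightarrow> 'a list list \<Rightarrow> ('p, 'a, 'v) assn" where
  "canon_rhs psis bs = big_disj (map2 star_vars psis bs)"

definition canonical_form ::
  "('p, 'a, 'v) assn list \<Rightarrow> 'a list list \<Rightarrow> ('p, 'a, 'v) assn list \<Rightarrow> 'a list list \<Rightarrow> bool" where
  "canonical_form phis as psis bs \<longleftrightarrow>
     length phis \<ge> 1 \<and> length as = length phis \<and> length bs = length psis \<and>
     (\<forall>\<phi>\<in>set phis. avars \<phi> = {}) \<and> (\<forall>\<psi>\<in>set psis. avars \<psi> = {}) \<and>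
     (\<forall>b\<in>set bs. set b \<subseteq> (\<Union>a\<in>set as. set a))"

definition Vset :: "'a list list \<Rightarrow> 'a set" where
  "Vset as = (\<Union>a\<in>set as. set a)"

definition Pi :: "'a list list \<Rightarrow> nat \<Rightarrow> 'a \<Rightarrow> nat" where
  "Pi as i c = count_list (as ! i) c"

definition Omega :: "'a list list \<Rightarrow> nat \<Rightarrow> 'a \<Rightarrow> nat" where
  "Omega bs j c = count_list (bs ! j) c"

definition PiOm_ge :: "'a list list \<Rightarrow> 'a list list \<Rightarrow> nat \<Rightarrow> nat \<Rightarrow> bool" where
  "PiOm_ge as bs i j \<longleftrightarrow> (\<forall>c\<in>Vset as. Pi as i c \<ge> Omega bs j c)"

definition parametricity_condition ::
  "(('v \<Rightarrow> int) \<Rightarrow> 'p \<Rightarrow> heap set) \<Rightarrow> ('v \<Rightarrow> int) \<Rightarrow>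
   ('p, 'a, 'v) assn list \<Rightarrow> 'a list list \<Rightarrow> ('p, 'a, 'v) assn list \<Rightarrow> 'a list list \<Rightarrow> bool" where
  "parametricity_condition I \<eta> phis as psis bs \<longleftrightarrow>
     (\<forall>h hs. is_heap h \<longrightarrow> length hs = length phis \<longrightarrow>
        (\<forall>i<length phis. hs ! i \<subseteq>\<^sub>m h \<and> hs ! i \<in> sem1 I \<eta> (phis ! i)) \<longrightarrow>
        (\<exists>i<length phis. \<exists>j<length psis. hs ! i \<in> sem1 I \<eta> (psis ! j) \<and> PiOm_ge as bs i j)
        \<or> (\<exists>j<length psis. bs ! j = [] \<and> h \<in> sem1 I \<eta> (psis ! j)))"

end

theory Submission
  imports Defs "HOL-Library.Countable"
begin

text \<open>
  Fix a heap h with subheaps h_i \<sqsubseteq> h satisfying \<phi>_i, and call a variable c balanced if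
  \<Pi>(k)(c) = \<Omega>(l)(c) whenever \<Pi>(k) \<ge> \<Omega>(l). Extend h by fresh cells, one for each selector
  \<sigma> that picks an occurrence of a balanced variable in every conjunct having one. The block of an
  occurrence p in conjunct i consists of the fresh cells whose selector picks p, plus, for one
  chosen p, the part of h outside h_i. The blocks of conjunct i are disjoint and together with
  h_i cover the extended heap H, while blocks of different conjuncts always meet.

  Interpret a balanced variable c by the heaps containing some block of an occurrence of c, and
  every other variable by true. Then H satisfies the left-hand side, so by unary validity some
  disjunct \<psi>_j * b_j1 * ... holds in H. The pieces of the balanced b_jq (one exists by (S2))
  contain pairwise disjoint blocks, which therefore come from a single conjunct i and from
  distinct occurrences. Hence \<Omega>(j)(c) \<le> \<Pi>(i)(c) for every balanced c, so \<Pi>(i) \<ge> \<Omega>(j) by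
  (S1); then equality on balanced variables means that every block of conjunct i lies in some
  piece, which confines the \<psi>_j-part to h_i.
\<close>

lemma is_heap_map_add: "is_heap f \<Longrightarrow> is_heap g \<Longrightarrow> is_heap (f ++ g)"
  by (auto simp: is_heap_def)

lemma is_heap_restrict: "is_heap f \<Longrightarrow> is_heap (f |` A)"
  by (auto simp: is_heap_def)

lemma map_le_map_add_disjoint: "dom f \<inter> dom g = {} \<Longrightarrow> f \<subseteq>\<^sub>m f ++ g"
  by (metis map_add_comm map_le_map_add)

lemma restrict_compl_map_add: "f \<subseteq>\<^sub>m h \<Longrightarrow> h |` (- dom f) ++ f = h"
  by (auto simp: map_le_def fun_eq_iff restrict_map_def map_add_def split: option.splits)

lemma map_le_restrict_compl: "g \<subseteq>\<^sub>m h \<Longrightarrow> dom g \<inter> A = {} \<Longrightarrow> g \<subseteq>\<^sub>m h |` (- A)"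
  by (auto simp: map_le_def restrict_map_def)

lemma map_le_if_dom_subset: "g \<subseteq>\<^sub>m H \<Longrightarrow> f \<subseteq>\<^sub>m H \<Longrightarrow> dom g \<subseteq> dom f \<Longrightarrow> g \<subseteq>\<^sub>m f"
  by (auto simp: map_le_def subset_iff)

lemma fresh_addresses:
  assumes "is_heap h"
  shows "\<exists>addr :: 'b :: countable \<Rightarrow> nat. inj addr \<and> (\<forall>x. addr x \<notin> dom h \<and> addr x \<noteq> 0)"
proof -
  define m where "m = Max (insert 0 (dom h))"
  have m: "y \<le> m" if "y \<in> dom h" for y
    using that assms by (simp add: m_def is_heap_def)
  have "Suc (m + to_nat x) \<notin> dom h" for x :: 'b
    using m[of "Suc (m + to_nat x)"] by auto
  moreover have "inj (\<lambda>x :: 'b. Suc (m + to_nat x))"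
    by (simp add: inj_def)
  ultimately show ?thesis
    by (intro exI[of _ "\<lambda>x. Suc (m + to_nat x)"]) simp
qed

lemma sem_subset_Heaps: "(\<forall>a. \<rho> a \<subseteq> Heaps n) \<Longrightarrow> sem I n \<eta> \<rho> p \<subseteq> Heaps n"
proof (induction p arbitrary: \<eta>)
  case (AStar p q)
  show ?case
  proof
    fix x assume "x \<in> sem I n \<eta> \<rho> (AStar p q)"
    then obtain fs gs where x: "x = map2 (++) fs gs" and fs: "fs \<in> sem I n \<eta> \<rho> p"
      and gs: "gs \<in> sem I n \<eta> \<rho> q"
      by (auto simp: sep_def)
    have "fs \<in> Heaps n" "gs \<in> Heaps n" using AStar fs gs by auto
    then show "x \<in> Heaps n" unfolding x Heaps_def
      by (auto simp: set_zip is_heap_map_add)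
  qed
next
  case (AAll v p)
  show ?case
  proof
    fix x assume "x \<in> sem I n \<eta> \<rho> (AAll v p)"
    hence "x \<in> sem I n (\<eta>(v:=0)) \<rho> p" by simp
    thus "x \<in> Heaps n" using AAll.IH AAll.prems by blast
  qed
qed (auto simp: Delta_def)

lemma sep_singleton_iff:
  assumes "P \<subseteq> Heaps 1" "Q \<subseteq> Heaps 1"
  shows "[h] \<in> sep P Q \<longleftrightarrow> (\<exists>f g. [f] \<in> P \<and> [g] \<in> Q \<and> dom f \<inter> dom g = {} \<and> h = f ++ g)"
proof
  assume "[h] \<in> sep P Q"
  then obtain fs gs where "fs \<in> P" "gs \<in> Q" "[h] = map2 (++) fs gs"
    and "list_all2 (\<lambda>f g. dom f \<inter> dom g = {}) fs gs"
    unfolding sep_def mem_Collect_eq by metis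
  moreover from \<open>fs \<in> P\<close> \<open>gs \<in> Q\<close> assms have "length fs = 1" "length gs = 1"
    by (auto simp: Heaps_def)
  then obtain f g where "fs = [f]" "gs = [g]"
    by (metis One_nat_def length_0_conv length_Suc_conv)
  ultimately show "\<exists>f g. [f] \<in> P \<and> [g] \<in> Q \<and> dom f \<inter> dom g = {} \<and> h = f ++ g"
    by auto
next
  assume "\<exists>f g. [f] \<in> P \<and> [g] \<in> Q \<and> dom f \<inter> dom g = {} \<and> h = f ++ g"
  then obtain f g where "[f] \<in> P" "[g] \<in> Q" "dom f \<inter> dom g = {}" "h = f ++ g"
    by blast
  then show "[h] \<in> sep P Q"
    unfolding sep_def by (intro CollectI exI[of _ "[f]"] exI[of _ "[g]"]) auto
qed

lemma sem_avars_empty: "avars p = {} \<Longrightarrow> sem I n \<eta> \<rho> p = sem I n \<eta> \<rho>' p"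
  by (induction p arbitrary: \<eta>) auto

lemma IRel1_subset_Heaps: "\<forall>a. \<rho> a \<in> IRel 1 \<Longrightarrow> \<forall>a. \<rho> a \<subseteq> Heaps 1"
  by (auto simp: IRel_def)

lemma sem_unary_mono:
  assumes \<rho>: "\<forall>a. \<rho> a \<in> IRel 1"
  shows "[g] \<in> sem I 1 \<eta> \<rho> p \<Longrightarrow> g \<subseteq>\<^sub>m h \<Longrightarrow> is_heap h \<Longrightarrow> [h] \<in> sem I 1 \<eta> \<rho> p"
proof (induction p arbitrary: \<eta> g h)
  case (Prim x)
  then show ?case by (auto simp: Delta_def Heaps_def intro: map_le_trans)
next
  case (AVar x)
  then show ?case using \<rho> by (auto simp: IRel_def Heaps_def heaps_le_def)
next
  case (AStar p q)
  note Heaps = sem_subset_Heaps[OF IRel1_subset_Heaps[OF \<rho>]]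
  note sep_iff = sep_singleton_iff[OF Heaps Heaps]
  have "[g] \<in> sep (sem I 1 \<eta> \<rho> p) (sem I 1 \<eta> \<rho> q)"
    using AStar.prems(1) by simp
  then obtain f1 f2 where f: "[f1] \<in> sem I 1 \<eta> \<rho> p" "[f2] \<in> sem I 1 \<eta> \<rho> q"
    "dom f1 \<inter> dom f2 = {}" "g = f1 ++ f2"
    using sep_iff by blast
  have f2h: "f2 \<subseteq>\<^sub>m h"
    using AStar.prems(2) f(4) map_le_map_add map_le_trans by blast
  have "f1 \<subseteq>\<^sub>m h"
    using AStar.prems(2) f(3,4) map_le_map_add_disjoint map_le_trans by blast
  then have "f1 \<subseteq>\<^sub>m h |` (- dom f2)"
    using f(3) by (rule map_le_restrict_compl)
  then have "[h |` (- dom f2)] \<in> sem I 1 \<eta> \<rho> p"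
    using AStar.IH(1)[OF f(1)] AStar.prems(3) by (simp add: is_heap_restrict)
  moreover have "dom (h |` (- dom f2)) \<inter> dom f2 = {}"
    by auto
  ultimately have "[h] \<in> sep (sem I 1 \<eta> \<rho> p) (sem I 1 \<eta> \<rho> q)"
    unfolding sep_iff using f(2) restrict_compl_map_add[OF f2h, symmetric] by blast
  then show ?case by simp
qed (auto simp: Heaps_def)

lemma mem_sem1_iff: "avars p = {} \<Longrightarrow> h \<in> sem1 I \<eta> p \<longleftrightarrow> [h] \<in> sem I 1 \<eta> \<rho> p"
  unfolding sem1_def using sem_avars_empty by blast

lemma sem_big_conjI:
  "xs \<noteq> [] \<Longrightarrow> \<forall>x\<in>set xs. hs \<in> sem I n \<eta> \<rho> x \<Longrightarrow> hs \<in> sem I n \<eta> \<rho> (big_conj xs)"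
  by (induction xs rule: big_conj.induct) auto

lemma sem_big_disjE:
  "hs \<in> sem I n \<eta> \<rho> (big_disj xs) \<Longrightarrow> \<exists>x\<in>set xs. hs \<in> sem I n \<eta> \<rho> x"
  by (induction xs rule: big_disj.induct) auto

lemma sem_canon_rhsE:
  assumes "hs \<in> sem I n \<eta> \<rho> (canon_rhs psis bs)" "length bs = length psis"
  obtains j where "j < length psis" "hs \<in> sem I n \<eta> \<rho> (star_vars (psis ! j) (bs ! j))"
  using sem_big_disjE[OF assms(1)[unfolded canon_rhs_def]] assms(2)
  by (auto simp: set_zip)

section \<open>Splitting a heap along a separating conjunction\<close>

definition splits :: "heap \<Rightarrow> heap \<Rightarrow> heap list \<Rightarrow> bool" where
  "splits H g fs \<longleftrightarrow> g \<subseteq>\<^sub>m H \<and> (\<forall>f\<in>set fs. f \<subseteq>\<^sub>m H) \<and> dom H = dom g \<union> (\<Union>f\<in>set fs. dom f)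
     \<and> (\<forall>f\<in>set fs. dom g \<inter> dom f = {})
     \<and> (\<forall>q<length fs. \<forall>q'<length fs. q \<noteq> q' \<longrightarrow> dom (fs!q) \<inter> dom (fs!q') = {})"

lemma splits_Nil: "splits H g [] \<longleftrightarrow> H = g"
  by (auto simp: splits_def map_le_def fun_eq_iff) (metis domIff)

lemma splits_snoc:
  "splits H g (fs @ [f]) \<longleftrightarrow> (\<exists>F. splits F g fs \<and> dom F \<inter> dom f = {} \<and> H = F ++ f)"
proof
  assume split: "splits H g (fs @ [f])"
  define F where "F = H |` (- dom f)"
  have pairwise: "dom ((fs @ [f]) ! q) \<inter> dom ((fs @ [f]) ! q') = {}"
    if "q < Suc (length fs)" "q' < Suc (length fs)" "q \<noteq> q'" for q q'
    using split that unfolding splits_def by simp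
  have disj_f: "dom (fs ! q) \<inter> dom f = {}" if q: "q < length fs" for q
    using pairwise[of q "length fs"] q by (simp add: nth_append)
  then have disj_set: "\<forall>f'\<in>set fs. dom f' \<inter> dom f = {}"
    by (metis in_set_conv_nth)
  have "splits F g fs"
    unfolding splits_def
  proof (intro conjI)
    show "g \<subseteq>\<^sub>m F"
      using split unfolding F_def splits_def by (intro map_le_restrict_compl) auto
    show "\<forall>f'\<in>set fs. f' \<subseteq>\<^sub>m F"
    proof
      fix f' assume "f' \<in> set fs"
      with split disj_set show "f' \<subseteq>\<^sub>m F"
        unfolding F_def splits_def by (intro map_le_restrict_compl) auto
    qed
    define X where "X = dom g \<union> (\<Union>f'\<in>set fs. dom f')"
    have "dom H = X \<union> dom f" "X \<inter> dom f = {}"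
      using split disj_set by (auto simp: splits_def X_def)
    moreover have "dom F = dom H - dom f"
      by (auto simp: F_def)
    ultimately show "dom F = dom g \<union> (\<Union>f'\<in>set fs. dom f')"
      unfolding X_def[symmetric] by blast
    show "\<forall>f'\<in>set fs. dom g \<inter> dom f' = {}"
      using split by (simp add: splits_def)
    show "\<forall>q<length fs. \<forall>q'<length fs. q \<noteq> q' \<longrightarrow> dom (fs ! q) \<inter> dom (fs ! q') = {}"
    proof (intro allI impI)
      fix q q' assume "q < length fs" "q' < length fs" "q \<noteq> q'"
      then show "dom (fs ! q) \<inter> dom (fs ! q') = {}"
        using pairwise[of q q'] by (simp add: nth_append)
    qed
  qed
  moreover have "H = F ++ f"
    unfolding F_def using split by (simp add: splits_def restrict_compl_map_add)
  moreover have "dom F \<inter> dom f = {}"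
    by (auto simp: F_def)
  ultimately show "\<exists>F. splits F g fs \<and> dom F \<inter> dom f = {} \<and> H = F ++ f"
    by blast
next
  assume "\<exists>F. splits F g fs \<and> dom F \<inter> dom f = {} \<and> H = F ++ f"
  then obtain F where split: "splits F g fs" and disj: "dom F \<inter> dom f = {}" and H: "H = F ++ f"
    by blast
  have FH: "F \<subseteq>\<^sub>m H"
    using disj H map_le_map_add_disjoint by simp
  have sub: "dom g \<subseteq> dom F" "\<forall>f'\<in>set fs. dom f' \<subseteq> dom F"
    using split unfolding splits_def by auto
  have disj_fs: "dom (fs!q) \<inter> dom f = {}" if "q < length fs" for q
    using sub disj that by (meson disjoint_iff nth_mem subsetD)
  show "splits H g (fs @ [f])"
    unfolding splits_def
  proof (intro conjI)
    show "g \<subseteq>\<^sub>m H"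
      using split map_le_trans[OF _ FH] by (simp add: splits_def)
    show "\<forall>f'\<in>set (fs @ [f]). f' \<subseteq>\<^sub>m H"
      using split map_le_trans[OF _ FH] H map_le_map_add[of f F] by (simp add: splits_def)
    show "dom H = dom g \<union> (\<Union>f'\<in>set (fs @ [f]). dom f')"
      using split H by (auto simp: splits_def)
    show "\<forall>f'\<in>set (fs @ [f]). dom g \<inter> dom f' = {}"
      using split disj sub by (auto simp: splits_def)
    show "\<forall>q<length (fs @ [f]). \<forall>q'<length (fs @ [f]). q \<noteq> q'
            \<longrightarrow> dom ((fs @ [f]) ! q) \<inter> dom ((fs @ [f]) ! q') = {}"
    proof (intro allI impI)
      fix q q' assume "q < length (fs @ [f])" "q' < length (fs @ [f])" "q \<noteq> q'"
      then show "dom ((fs @ [f]) ! q) \<inter> dom ((fs @ [f]) ! q') = {}"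
        using split disj_fs[of q] disj_fs[of q'] unfolding splits_def
        by (cases "q < length fs"; cases "q' < length fs") (auto simp: nth_append)
    qed
  qed
qed

lemma star_vars_Nil [simp]: "star_vars \<phi> [] = \<phi>"
  by (simp add: star_vars_def)

lemma star_vars_snoc [simp]: "star_vars \<phi> (xs @ [a]) = AStar (star_vars \<phi> xs) (AVar a)"
  by (simp add: star_vars_def)

lemma ex_length_Suc_iff_snoc:
  "(\<exists>xs. length xs = Suc n \<and> P xs) \<longleftrightarrow> (\<exists>ys y. length ys = n \<and> P (ys @ [y]))"
  by (metis length_append_singleton rev_exhaust length_0_conv nat.distinct(1) Suc_inject)

lemma sem_star_vars_iff:
  assumes \<rho>: "\<forall>a. \<rho> a \<in> IRel 1"
  shows "[H] \<in> sem I 1 \<eta> \<rho> (star_vars \<phi> xs) \<longleftrightarrow>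
    (\<exists>g fs. length fs = length xs \<and> [g] \<in> sem I 1 \<eta> \<rho> \<phi> \<and>
       (\<forall>q<length xs. [fs!q] \<in> \<rho> (xs!q)) \<and> splits H g fs)"
proof (induction xs arbitrary: H rule: rev_induct)
  case Nil
  show ?case by (simp add: splits_Nil)
next
  case (snoc a xs)
  have Heaps: "\<forall>a. \<rho> a \<subseteq> Heaps 1"
    using IRel1_subset_Heaps[OF \<rho>] .
  note sep_iff = sep_singleton_iff[OF sem_subset_Heaps[OF Heaps] Heaps[rule_format]]
  have "[H] \<in> sem I 1 \<eta> \<rho> (star_vars \<phi> (xs @ [a])) \<longleftrightarrow>
      (\<exists>F f. [F] \<in> sem I 1 \<eta> \<rho> (star_vars \<phi> xs) \<and> [f] \<in> \<rho> a \<and> dom F \<inter> dom f = {} \<and> H = F ++ f)"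
    by (simp only: star_vars_snoc sem.simps sep_iff)
  also have "\<dots> \<longleftrightarrow> (\<exists>g fs f. length fs = length xs \<and> [g] \<in> sem I 1 \<eta> \<rho> \<phi> \<and>
      ((\<forall>q<length xs. [fs!q] \<in> \<rho> (xs!q)) \<and> [f] \<in> \<rho> a) \<and> splits H g (fs @ [f]))"
    unfolding snoc.IH splits_snoc by blast
  also have "\<dots> \<longleftrightarrow> (\<exists>g fs. length fs = length (xs @ [a]) \<and> [g] \<in> sem I 1 \<eta> \<rho> \<phi> \<and>
      (\<forall>q<length (xs @ [a]). [fs!q] \<in> \<rho> ((xs @ [a])!q)) \<and> splits H g fs)"
    unfolding length_append_singleton ex_length_Suc_iff_snoc
    by (intro ex_cong1 conj_cong refl) (auto simp: nth_append less_Suc_eq)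
  finally show ?case .
qed

lemma splits_restrict_blocks:
  assumes sub: "\<forall>q<n. B q \<subseteq> dom H" and disj: "\<forall>q<n. \<forall>q'<n. q \<noteq> q' \<longrightarrow> B q \<inter> B q' = {}"
  shows "splits H (H |` (- (\<Union>q<n. B q))) (map (\<lambda>q. H |` B q) [0..<n])"
  unfolding splits_def
proof (intro conjI)
  show "H |` (- (\<Union>q<n. B q)) \<subseteq>\<^sub>m H" "\<forall>f\<in>set (map (\<lambda>q. H |` B q) [0..<n]). f \<subseteq>\<^sub>m H"
    by (auto simp: map_le_def)
  show "dom H = dom (H |` (- (\<Union>q<n. B q))) \<union> (\<Union>f\<in>set (map (\<lambda>q. H |` B q) [0..<n]). dom f)"
    using sub by auto
  show "\<forall>f\<in>set (map (\<lambda>q. H |` B q) [0..<n]). dom (H |` (- (\<Union>q<n. B q))) \<inter> dom f = {}"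
    by auto
  show "\<forall>q<length (map (\<lambda>q. H |` B q) [0..<n]). \<forall>q'<length (map (\<lambda>q. H |` B q) [0..<n]).
      q \<noteq> q' \<longrightarrow> dom (map (\<lambda>q. H |` B q) [0..<n] ! q) \<inter> dom (map (\<lambda>q. H |` B q) [0..<n] ! q') = {}"
    using disj by auto
qed

definition positions_in :: "'a set \<Rightarrow> 'a list \<Rightarrow> nat set" where
  "positions_in C xs = {p. p < length xs \<and> xs ! p \<in> C}"

lemma finite_positions_in [simp]: "finite (positions_in C xs)"
  by (simp add: positions_in_def)

lemma count_list_eq_card_positions_in: "count_list xs c = card (positions_in {c} xs)"
  by (simp add: positions_in_def count_list_eq_length_filter length_filter_conv_card eq_commute)

lemma positions_in_singleton_subset: "c \<in> C \<Longrightarrow> positions_in {c} xs \<subseteq> positions_in C xs"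
  by (auto simp: positions_in_def)

lemma positions_in_nonempty:
  assumes "c \<in> C" "count_list xs c > 0"
  shows "positions_in C xs \<noteq> {}"
proof -
  have "positions_in {c} xs \<noteq> {}"
    using assms(2) by (intro notI) (simp add: count_list_eq_card_positions_in)
  then show ?thesis
    using positions_in_singleton_subset[OF assms(1)] by blast
qed

context
  fixes f :: "nat \<Rightarrow> nat" and C :: "'a set" and xs ys :: "'a list"
  assumes inj: "inj_on f (positions_in C xs)"
    and label: "\<forall>q\<in>positions_in C xs. f q < length ys \<and> ys ! f q = xs ! q"
begin

lemma image_positions_in_singleton: "c \<in> C \<Longrightarrow> f ` positions_in {c} xs \<subseteq> positions_in {c} ys"
  using label positions_in_singleton_subset by (fastforce simp: positions_in_def)

lemma count_list_le_if_inj_on_positions: "c \<in> C \<Longrightarrow> count_list xs c \<le> count_list ys c"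
  unfolding count_list_eq_card_positions_in
  using card_inj_on_le[OF inj_on_subset[OF inj positions_in_singleton_subset]
      image_positions_in_singleton finite_positions_in] .

lemma image_positions_in_if_counts_eq:
  assumes eq: "\<forall>c\<in>C. count_list xs c = count_list ys c"
  shows "f ` positions_in C xs = positions_in C ys"
proof
  show "f ` positions_in C xs \<subseteq> positions_in C ys"
    using label by (auto simp: positions_in_def)
  show "positions_in C ys \<subseteq> f ` positions_in C xs"
  proof
    fix p assume p: "p \<in> positions_in C ys"
    define c where "c = ys ! p"
    have c: "c \<in> C"
      using p by (simp add: positions_in_def c_def)
    have "card (f ` positions_in {c} xs) = card (positions_in {c} ys)"
      using eq c card_image[OF inj_on_subset[OF inj positions_in_singleton_subset[OF c]]]
      by (simp add: count_list_eq_card_positions_in)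
    then have "f ` positions_in {c} xs = positions_in {c} ys"
      using card_subset_eq[OF finite_positions_in image_positions_in_singleton[OF c]] by simp
    moreover have "p \<in> positions_in {c} ys"
      using p by (simp add: positions_in_def c_def)
    ultimately show "p \<in> f ` positions_in C xs"
      using positions_in_singleton_subset[OF c] by blast
  qed
qed

end

section \<open>Tilings\<close>

locale tiling =
  fixes M :: nat and Pos :: "nat \<Rightarrow> nat set" and hs :: "heap list" and H :: heap
    and D :: "nat \<Rightarrow> nat \<Rightarrow> nat set"
  assumes is_heap: "is_heap H"
    and map_le_H: "i < M \<Longrightarrow> hs ! i \<subseteq>\<^sub>m H"
    and block_subset: "D i p \<subseteq> dom H"
    and blocks_disjoint: "p \<noteq> p' \<Longrightarrow> D i p \<inter> D i p' = {}"
    and block_fresh: "i < M \<Longrightarrow> D i p \<inter> dom (hs ! i) = {}"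
    and blocks_cover: "i < M \<Longrightarrow> Pos i \<noteq> {} \<Longrightarrow> dom H - dom (hs ! i) \<subseteq> (\<Union>p\<in>Pos i. D i p)"
    and blocks_meet: "i < M \<Longrightarrow> i' < M \<Longrightarrow> p \<in> Pos i \<Longrightarrow> p' \<in> Pos i' \<Longrightarrow>
      (i = i' \<Longrightarrow> p = p') \<Longrightarrow> D i p \<inter> D i' p' \<noteq> {}"

definition selectors :: "nat \<Rightarrow> (nat \<Rightarrow> nat set) \<Rightarrow> nat list set" where
  "selectors M A = {\<sigma>. length \<sigma> = M \<and> (\<forall>i<M. \<sigma> ! i \<in> A i)}"

lemma finite_selectors:
  assumes "\<forall>i<M. finite (A i)"
  shows "finite (selectors M A)"
proof (rule finite_subset)
  show "selectors M A \<subseteq> {\<sigma>. set \<sigma> \<subseteq> (\<Union>i<M. A i) \<and> length \<sigma> = M}"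
    unfolding selectors_def by (force simp: in_set_conv_nth)
  show "finite {\<sigma>. set \<sigma> \<subseteq> (\<Union>i<M. A i) \<and> length \<sigma> = M}"
    using assms by (intro finite_lists_length_eq) auto
qed

lemma selectors_through_two:
  assumes "\<forall>k<M. A k \<noteq> {}" "i < M" "i' < M" "p \<in> A i" "p' \<in> A i'" "i = i' \<Longrightarrow> p = p'"
  shows "\<exists>\<sigma>\<in>selectors M A. \<sigma> ! i = p \<and> \<sigma> ! i' = p'"
proof
  let ?\<sigma> = "map (\<lambda>k. if k = i then p else if k = i' then p' else SOME x. x \<in> A k) [0..<M]"
  show "?\<sigma> \<in> selectors M A"
    using assms by (auto simp: selectors_def some_in_eq)
  show "?\<sigma> ! i = p \<and> ?\<sigma> ! i' = p'"
    using assms(2,3,6) by (cases "i = i'") simp_all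
qed

context
  fixes M :: nat and Pos :: "nat \<Rightarrow> nat set" and hs :: "heap list" and h :: heap
    and addr :: "nat list \<Rightarrow> nat"
  assumes h: "is_heap h" and hs_le: "\<forall>i<M. hs ! i \<subseteq>\<^sub>m h" and fin: "\<forall>i<M. finite (Pos i)"
    and addr: "inj addr" "\<forall>\<sigma>. addr \<sigma> \<notin> dom h \<and> addr \<sigma> \<noteq> 0"
begin

definition grid :: "nat list set" where
  "grid = selectors M (\<lambda>i. if Pos i = {} then {0} else Pos i)"

definition grid_heap :: heap where
  "grid_heap = h ++ (\<lambda>x. if x \<in> addr ` grid then Some 0 else None)"

definition grid_block :: "nat \<Rightarrow> nat \<Rightarrow> nat set" where
  "grid_block i p = addr ` {\<sigma>\<in>grid. \<sigma> ! i = p}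
     \<union> (if p = (SOME p. p \<in> Pos i) then dom h - dom (hs ! i) else {})"

lemma dom_grid_heap: "dom grid_heap = dom h \<union> addr ` grid"
  by (auto simp: grid_heap_def dom_def)

lemma map_le_grid_heap: "i < M \<Longrightarrow> hs ! i \<subseteq>\<^sub>m grid_heap"
proof -
  have "h \<subseteq>\<^sub>m grid_heap"
    unfolding grid_heap_def using addr by (intro map_le_map_add_disjoint) (auto simp: dom_def)
  then show "i < M \<Longrightarrow> hs ! i \<subseteq>\<^sub>m grid_heap"
    using hs_le map_le_trans by blast
qed

lemma is_heap_grid_heap: "is_heap grid_heap"
proof -
  have "finite grid"
    using fin by (auto simp: grid_def intro: finite_selectors)
  then show ?thesis
    using h addr by (simp add: is_heap_def dom_grid_heap image_iff)
qed

lemma grid_block_fresh: "i < M \<Longrightarrow> grid_block i p \<inter> dom (hs ! i) = {}"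
proof -
  assume "i < M"
  then have "addr ` grid \<inter> dom (hs ! i) = {}"
    using addr hs_le map_le_implies_dom_le by blast
  then show ?thesis
    by (auto simp: grid_block_def)
qed

lemma grid_blocks_cover:
  assumes i: "i < M" and ne: "Pos i \<noteq> {}"
  shows "dom grid_heap - dom (hs ! i) \<subseteq> (\<Union>p\<in>Pos i. grid_block i p)"
proof
  fix x assume x: "x \<in> dom grid_heap - dom (hs ! i)"
  show "x \<in> (\<Union>p\<in>Pos i. grid_block i p)"
  proof (cases "x \<in> dom h")
    case True
    then show ?thesis
      using x ne some_in_eq[of "Pos i"] by (auto simp: grid_block_def)
  next
    case False
    then obtain \<sigma> where "\<sigma> \<in> grid" "x = addr \<sigma>"
      using x dom_grid_heap by auto
    moreover have "\<sigma> ! i \<in> Pos i"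
      using calculation i ne by (auto simp: grid_def selectors_def split: if_splits)
    ultimately show ?thesis
      by (auto simp: grid_block_def)
  qed
qed

lemma grid_blocks_meet:
  assumes rows: "i < M" "i' < M" and "p \<in> Pos i" "p' \<in> Pos i'" and distinct: "i = i' \<Longrightarrow> p = p'"
  shows "grid_block i p \<inter> grid_block i' p' \<noteq> {}"
proof -
  let ?A = "\<lambda>i. if Pos i = {} then {0} else Pos i"
  have "\<forall>k<M. ?A k \<noteq> {}" "p \<in> ?A i" "p' \<in> ?A i'"
    using assms(3,4) by auto
  then obtain \<sigma> where "\<sigma> \<in> grid" "\<sigma> ! i = p" "\<sigma> ! i' = p'"
    using selectors_through_two[of M ?A i i' p p'] rows distinct by (auto simp: grid_def)
  then show ?thesis
    by (auto simp: grid_block_def)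
qed

lemma tiling_grid: "tiling M Pos hs grid_heap grid_block"
proof
  show "grid_block i p \<subseteq> dom grid_heap" for i p
    by (auto simp: grid_block_def dom_grid_heap)
  show "grid_block i p \<inter> grid_block i p' = {}" if "p \<noteq> p'" for i p p'
    using that addr by (auto simp: grid_block_def inj_eq)
qed (use is_heap_grid_heap map_le_grid_heap grid_block_fresh grid_blocks_cover grid_blocks_meet in auto)

end

lemma tiling_exists:
  assumes "is_heap h" "\<forall>i<M. hs ! i \<subseteq>\<^sub>m h" "\<forall>i<M. finite (Pos i)"
  shows "\<exists>H D. tiling M Pos hs H D"
proof -
  obtain addr :: "nat list \<Rightarrow> nat" where "inj addr" "\<forall>\<sigma>. addr \<sigma> \<notin> dom h \<and> addr \<sigma> \<noteq> 0"
    using fresh_addresses[OF assms(1)] by blast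
  then show ?thesis
    using tiling_grid[OF assms] by blast
qed

section \<open>The block valuation\<close>

locale row_tiling = tiling "length as" "\<lambda>i. positions_in C (as ! i)" hs H D
  for as :: "'a list list" and C :: "'a set" and hs H D
begin

definition block_rel :: "'a \<Rightarrow> heap list set" where
  "block_rel c = (if c \<in> C
     then {[f] | f. is_heap f \<and> (\<exists>i<length as. \<exists>p\<in>positions_in C (as ! i). as ! i ! p = c \<and> H |` D i p \<subseteq>\<^sub>m f)}
     else Heaps 1)"

lemma block_rel_IRel: "\<forall>c. block_rel c \<in> IRel 1"
proof
  fix c
  show "block_rel c \<in> IRel 1"
    unfolding IRel_def
  proof (intro CollectI conjI ballI impI)
    show "block_rel c \<subseteq> Heaps 1"
      by (auto simp: block_rel_def Heaps_def)
  next
    fix gs hs' assume gs: "gs \<in> block_rel c" and hs': "hs' \<in> Heaps 1" and le: "heaps_le gs hs'"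
    show "hs' \<in> block_rel c"
    proof (cases "c \<in> C")
      case True
      with gs obtain f i p where f: "gs = [f]" "i < length as" "p \<in> positions_in C (as ! i)"
        "as ! i ! p = c" "H |` D i p \<subseteq>\<^sub>m f"
        by (auto simp: block_rel_def)
      from hs' obtain f' where f': "hs' = [f']" "is_heap f'"
        by (auto simp: Heaps_def length_Suc_conv)
      have "H |` D i p \<subseteq>\<^sub>m f'"
        using le f f' map_le_trans by (auto simp: heaps_le_def)
      then show ?thesis
        using True f f' by (auto simp: block_rel_def)
    next
      case False
      then show ?thesis
        using hs' by (simp add: block_rel_def)
    qed
  qed
qed

lemma hs_is_heap: "i < length as \<Longrightarrow> is_heap (hs ! i)"
  using is_heap map_le_implies_dom_le[OF map_le_H] unfolding is_heap_def
  by (meson finite_subset subsetD)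

lemma sem_star_vars_row:
  assumes i: "i < length as" and \<phi>: "avars \<phi> = {}" "hs ! i \<in> sem1 I \<eta> \<phi>"
  shows "[H] \<in> sem I 1 \<eta> block_rel (star_vars \<phi> (as ! i))"
proof -
  define B where "B q = (if q \<in> positions_in C (as ! i) then D i q else {})" for q
  define n where "n = length (as ! i)"
  define g where "g = H |` (- (\<Union>q<n. B q))"
  define fs where "fs = map (\<lambda>q. H |` B q) [0..<n]"
  have "splits H g fs"
    unfolding g_def fs_def
    using block_subset blocks_disjoint by (intro splits_restrict_blocks) (auto simp: B_def)
  moreover have "[g] \<in> sem I 1 \<eta> block_rel \<phi>"
  proof -
    have "hs ! i \<subseteq>\<^sub>m g"
      unfolding g_def using map_le_H[OF i] block_fresh[OF i]
      by (intro map_le_restrict_compl) (auto simp: B_def)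
    moreover have "[hs ! i] \<in> sem I 1 \<eta> block_rel \<phi>"
      using \<phi> mem_sem1_iff by blast
    ultimately show ?thesis
      using sem_unary_mono[OF block_rel_IRel] is_heap_restrict[OF is_heap] unfolding g_def
      by blast
  qed
  moreover have "[fs ! q] \<in> block_rel (as ! i ! q)" if "q < n" for q
  proof (cases "q \<in> positions_in C (as ! i)")
    case True
    have "fs ! q = H |` D i q"
      using that True by (simp add: fs_def B_def)
    moreover have "as ! i ! q \<in> C"
      using True by (simp add: positions_in_def)
    moreover have "\<exists>i'<length as. \<exists>p\<in>positions_in C (as ! i'). as ! i' ! p = as ! i ! q \<and> H |` D i' p \<subseteq>\<^sub>m H |` D i q"
      using i True by (intro exI[of _ i] conjI bexI[of _ q]) simp_all
    ultimately show ?thesis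
      using is_heap_restrict[OF is_heap] by (simp add: block_rel_def)
  next
    case False
    then show ?thesis
      using that by (auto simp: n_def fs_def B_def block_rel_def positions_in_def Heaps_def is_heap_def)
  qed
  ultimately show ?thesis
    unfolding sem_star_vars_iff[OF block_rel_IRel]
    by (intro exI[of _ g] exI[of _ fs]) (simp add: fs_def n_def)
qed

lemma sem_canon_lhs:
  assumes "length phis = length as" "as \<noteq> []"
    and "\<forall>i<length as. avars (phis ! i) = {} \<and> hs ! i \<in> sem1 I \<eta> (phis ! i)"
  shows "[H] \<in> sem I 1 \<eta> block_rel (canon_lhs phis as)"
  unfolding canon_lhs_def
proof (rule sem_big_conjI)
  show "map2 star_vars phis as \<noteq> []"
    using assms(1,2) by (cases phis) auto
  show "\<forall>x\<in>set (map2 star_vars phis as). [H] \<in> sem I 1 \<eta> block_rel x"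
  proof
    fix x assume "x \<in> set (map2 star_vars phis as)"
    then obtain i where "i < length as" "x = star_vars (phis ! i) (as ! i)"
      using assms(1) by (auto simp: set_zip)
    then show "[H] \<in> sem I 1 \<eta> block_rel x"
      using sem_star_vars_row assms(3) by blast
  qed
qed

lemma valid_disjunct:
  assumes "valid I 1 \<eta> (canon_lhs phis as) (canon_rhs psis bs)" and canon: "canonical_form phis as psis bs"
    and "\<forall>i<length as. hs ! i \<in> sem1 I \<eta> (phis ! i)"
  obtains j where "j < length psis" "[H] \<in> sem I 1 \<eta> block_rel (star_vars (psis ! j) (bs ! j))"
proof -
  have "[H] \<in> sem I 1 \<eta> block_rel (canon_lhs phis as)"
    using canon assms(3) by (intro sem_canon_lhs) (auto simp: canonical_form_def)
  then have "[H] \<in> sem I 1 \<eta> block_rel (canon_rhs psis bs)"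
    using assms(1) block_rel_IRel unfolding valid_def by (meson subsetD)
  then show thesis
    using canon that by (auto simp: canonical_form_def elim: sem_canon_rhsE)
qed

lemma pieces_in_one_row:
  assumes split: "splits H g fs" and len: "length fs = length bs"
    and pieces: "\<forall>q<length bs. [fs ! q] \<in> block_rel (bs ! q)" and ne: "positions_in C bs \<noteq> {}"
  obtains i blk where "i < length as" "inj_on blk (positions_in C bs)"
    "\<forall>q\<in>positions_in C bs. blk q < length (as ! i) \<and> as ! i ! blk q = bs ! q"
    "\<forall>q\<in>positions_in C bs. D i (blk q) \<inter> dom g = {}"
proof -
  let ?Q = "positions_in C bs"
  have "\<exists>i p. i < length as \<and> p \<in> positions_in C (as ! i) \<and> as ! i ! p = bs ! q \<and> D i p \<subseteq> dom (fs ! q)"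
    if q: "q \<in> ?Q" for q
  proof -
    from q have "bs ! q \<in> C" "[fs ! q] \<in> block_rel (bs ! q)"
      using pieces by (auto simp: positions_in_def)
    then have "\<exists>i<length as. \<exists>p\<in>positions_in C (as ! i). as ! i ! p = bs ! q \<and> H |` D i p \<subseteq>\<^sub>m fs ! q"
      by (simp add: block_rel_def)
    then obtain i p where "i < length as" "p \<in> positions_in C (as ! i)" "as ! i ! p = bs ! q"
      "H |` D i p \<subseteq>\<^sub>m fs ! q"
      by blast
    moreover have "dom (H |` D i p) = D i p"
      using block_subset by auto
    ultimately show ?thesis
      by (metis map_le_implies_dom_le)
  qed
  then obtain row pos where rp: "\<And>q. q \<in> ?Q \<Longrightarrow> row q < length as \<and> pos q \<in> positions_in C (as ! row q)
      \<and> as ! row q ! pos q = bs ! q \<and> D (row q) (pos q) \<subseteq> dom (fs ! q)"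
    by metis
  have pieces_disjoint: "dom (fs ! q) \<inter> dom (fs ! q') = {}" if "q \<in> ?Q" "q' \<in> ?Q" "q \<noteq> q'" for q q'
    using split len that by (auto simp: splits_def positions_in_def)
  \<comment> \<open>blocks of different rows always overlap, so disjoint pieces sit in a single row\<close>
  have same_row: "row q = row q' \<and> pos q \<noteq> pos q'" if "q \<in> ?Q" "q' \<in> ?Q" "q \<noteq> q'" for q q'
    using blocks_meet[of "row q" "row q'" "pos q" "pos q'"] rp[OF that(1)] rp[OF that(2)]
      pieces_disjoint[OF that] by blast
  obtain q0 where q0: "q0 \<in> ?Q"
    using ne by blast
  have row: "row q = row q0" if "q \<in> ?Q" for q
    using same_row[OF that q0] by (cases "q = q0") auto
  show thesis
  proof
    show "row q0 < length as"
      using rp[OF q0] by blast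
    show "inj_on pos ?Q"
      using same_row by (meson inj_onI)
    show "\<forall>q\<in>?Q. pos q < length (as ! row q0) \<and> as ! row q0 ! pos q = bs ! q"
      using rp row by (fastforce simp: positions_in_def)
    have "\<forall>f\<in>set fs. dom g \<inter> dom f = {}"
      using split by (simp add: splits_def)
    then show "\<forall>q\<in>?Q. D (row q0) (pos q) \<inter> dom g = {}"
      using rp row len by (fastforce simp: positions_in_def)
  qed
qed

lemma star_vars_row_counts:
  assumes H: "[H] \<in> sem I 1 \<eta> block_rel (star_vars \<psi> bs)" and \<psi>: "avars \<psi> = {}"
    and ne: "positions_in C bs \<noteq> {}"
  obtains i where "i < length as" "\<forall>c\<in>C. count_list bs c \<le> count_list (as ! i) c"
    "(\<forall>c\<in>C. count_list bs c = count_list (as ! i) c) \<Longrightarrow> hs ! i \<in> sem1 I \<eta> \<psi>"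
proof -
  obtain g fs where len: "length fs = length bs" and g: "[g] \<in> sem I 1 \<eta> block_rel \<psi>"
    and pieces: "\<forall>q<length bs. [fs ! q] \<in> block_rel (bs ! q)" and split: "splits H g fs"
    using H sem_star_vars_iff[OF block_rel_IRel] by blast
  obtain i blk where i: "i < length as" and inj: "inj_on blk (positions_in C bs)"
    and label: "\<forall>q\<in>positions_in C bs. blk q < length (as ! i) \<and> as ! i ! blk q = bs ! q"
    and avoid: "\<forall>q\<in>positions_in C bs. D i (blk q) \<inter> dom g = {}"
    using pieces_in_one_row[OF split len pieces ne] by blast
  have le: "\<forall>c\<in>C. count_list bs c \<le> count_list (as ! i) c"
    using count_list_le_if_inj_on_positions[OF inj label] by blast
  have sem1: "hs ! i \<in> sem1 I \<eta> \<psi>" if eq: "\<forall>c\<in>C. count_list bs c = count_list (as ! i) c"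
  proof -
    define U where "U = (\<Union>p\<in>positions_in C (as ! i). D i p)"
    have img: "blk ` positions_in C bs = positions_in C (as ! i)"
      using image_positions_in_if_counts_eq[OF inj label eq] .
    then have "positions_in C (as ! i) \<noteq> {}"
      using ne by blast
    then have "dom H - dom (hs ! i) \<subseteq> U"
      using blocks_cover[OF i] by (simp add: U_def)
    moreover have "U \<inter> dom g = {}"
      unfolding U_def img[symmetric] using avoid by blast
    moreover have gH: "g \<subseteq>\<^sub>m H"
      using split by (simp add: splits_def)
    ultimately have "dom g \<subseteq> dom (hs ! i)"
      using map_le_implies_dom_le[OF gH] by blast
    then have "g \<subseteq>\<^sub>m hs ! i"
      using map_le_if_dom_subset[OF gH map_le_H[OF i]] by blast
    then have "[hs ! i] \<in> sem I 1 \<eta> block_rel \<psi>"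
      using sem_unary_mono[OF block_rel_IRel g] hs_is_heap[OF i] by blast
    then show ?thesis
      using mem_sem1_iff[OF \<psi>] by blast
  qed
  show thesis
    using that[OF i le sem1] .
qed

end

lemma row_tiling_exists:
  "is_heap h \<Longrightarrow> \<forall>i<length as. hs ! i \<subseteq>\<^sub>m h \<Longrightarrow> \<exists>H D. row_tiling as C hs H D"
  using tiling_exists[of h "length as" hs "\<lambda>i. positions_in C (as ! i)"] by (simp add: row_tiling_def)

definition balanced_vars :: "'a list list \<Rightarrow> 'a list list \<Rightarrow> 'a set" where
  "balanced_vars as bs = {c \<in> Vset as. \<forall>k<length as. \<forall>l<length bs.
     PiOm_ge as bs k l \<longrightarrow> Pi as k c = Omega bs l c}"

lemma PiOm_ge_if_le_on_balanced_vars: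
  assumes S1: "\<forall>i<length as. \<forall>j<length bs. \<not> PiOm_ge as bs i j \<longrightarrow>
      (\<exists>c\<in>Vset as. Pi as i c < Omega bs j c \<and>
         (\<forall>k<length as. \<forall>l<length bs. PiOm_ge as bs k l \<longrightarrow> Pi as k c = Omega bs l c))"
    and "i < length as" "j < length bs" and le: "\<forall>c\<in>balanced_vars as bs. Omega bs j c \<le> Pi as i c"
  shows "PiOm_ge as bs i j"
proof (rule ccontr)
  assume "\<not> PiOm_ge as bs i j"
  then obtain c where "c \<in> balanced_vars as bs" "Pi as i c < Omega bs j c"
    using S1 assms(2,3) unfolding balanced_vars_def by blast
  then show False
    using le by fastforce
qed

theorem mainTheorem5:
  fixes I :: "('v \<Rightarrow> int) \<Rightarrow> 'p \<Rightarrow> heap set"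
    and \<eta> :: "'v \<Rightarrow> int"
    and phis psis :: "('p, 'a, 'v) assn list"
    and as bs :: "'a list list"
  assumes canon: "canonical_form phis as psis bs"
    and S1: "\<forall>i<length phis. \<forall>j<length psis. \<not> PiOm_ge as bs i j \<longrightarrow>
              (\<exists>c\<in>Vset as. Pi as i c < Omega bs j c \<and>
                 (\<forall>k<length phis. \<forall>l<length psis. PiOm_ge as bs k l \<longrightarrow> Pi as k c = Omega bs l c))"
    and S2: "\<forall>j<length psis. \<exists>c\<in>Vset as. Omega bs j c > 0 \<and>
                 (\<forall>k<length phis. \<forall>l<length psis. PiOm_ge as bs k l \<longrightarrow> Pi as k c = Omega bs l c)"
    and unary_valid: "valid I 1 \<eta> (canon_lhs phis as) (canon_rhs psis bs)"
  shows "parametricity_condition I \<eta> phis as psis bs"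
  unfolding parametricity_condition_def
proof (intro allI impI disjI1)
  fix h hs
  assume h: "is_heap h" and len: "length hs = length phis"
    and hs: "\<forall>i<length phis. hs ! i \<subseteq>\<^sub>m h \<and> hs ! i \<in> sem1 I \<eta> (phis ! i)"
  define C where "C = balanced_vars as bs"
  have lens: "length as = length phis" "length bs = length psis"
    using canon by (simp_all add: canonical_form_def)
  have "\<forall>i<length as. hs ! i \<subseteq>\<^sub>m h"
    using hs lens by simp
  then obtain H D where "row_tiling as C hs H D"
    using row_tiling_exists[OF h] by blast
  then interpret row_tiling as C hs H D .
  obtain j where j: "j < length psis" "[H] \<in> sem I 1 \<eta> block_rel (star_vars (psis ! j) (bs ! j))"
    using valid_disjunct[OF unary_valid canon] hs lens by auto
  obtain c0 where "c0 \<in> C" "count_list (bs ! j) c0 > 0"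
    using S2 j(1) lens by (auto simp: C_def balanced_vars_def Omega_def)
  then have "positions_in C (bs ! j) \<noteq> {}"
    by (rule positions_in_nonempty)
  then obtain i where i: "i < length as" "\<forall>c\<in>C. count_list (bs ! j) c \<le> count_list (as ! i) c"
    "(\<forall>c\<in>C. count_list (bs ! j) c = count_list (as ! i) c) \<Longrightarrow> hs ! i \<in> sem1 I \<eta> (psis ! j)"
    using star_vars_row_counts[OF j(2)] canon j(1) by (auto simp: canonical_form_def)
  have ge: "PiOm_ge as bs i j"
    using PiOm_ge_if_le_on_balanced_vars[of as bs i j] S1 i(1,2) j(1) lens
    by (simp add: C_def Pi_def Omega_def)
  then have "hs ! i \<in> sem1 I \<eta> (psis ! j)"
    using i(1,3) j(1) lens by (simp add: C_def balanced_vars_def Pi_def Omega_def)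
  then show "\<exists>i<length phis. \<exists>j<length psis. hs ! i \<in> sem1 I \<eta> (psis ! j) \<and> PiOm_ge as bs i j"
    using ge i(1) j(1) lens by auto
qed

end
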